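(* Let $q>1$ and let $\rho$ be a positive $2\pi$-periodic $C^2$ function with $(\ln\rho)''(t)<\sqrt{q}/(1+\sqrt{q})$ for all $t$; let $y(\theta)=\rho(\theta)(\cos\theta,\sin\theta)^T$, and let $\phi$ be a continuous function on $\mathbb{S}^1$. With the notation in the context, suppose there is a sequence of positive numbers $k_n\to\infty$ such that for every $\eta\in\mathbb{S}^1$ and every integer $N\ge0$, $$\sum_{j,l=1}^2\big(f_\eta^{j,l}\big)^N\frac{\phi(\mathcal{T}_{j,l}\eta+\delta_{l,2}\pi)\,\Psi_\eta^{j,l}}{|\det D^2\psi_\eta^{j,l}|^{1/2}}\,e^{\mathrm{i}\pi\frac{(-1)^l(1-(-1)^j)}{4}+\mathrm{i}k_n\psi_\eta^{j,l}}\longrightarrow0\quad(n\to\infty).$$ Let $\eta\in\mathbb{S}^1$ satisfy $\rho'(\theta_\eta+\pi)=0\neq\rho'(\theta_\eta)$. Then $\phi(\mathcal{T}_{1,1}\eta)=\phi(\mathcal{T}_{2,2}\eta+\pi)=0$. Moreover, $\phi(\theta_\eta)$ and $\phi(\theta_\eta+\pi)$ are either both zero or both nonzero.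
   Context: Identify $\mathbb{S}^1$ with $\mathbb{R}/(2\pi\mathbb{Z})$ via $\theta\mapsto(\cos\theta,\sin\theta)^T$; $\theta_\eta$ is the angle of $\eta$, and $x^\perp=(-x_2,x_1)^T$. For $\eta\in\mathbb{S}^1$ and $\xi=(\cos\theta_\xi,\sin\theta_\xi)$: $\psi_\eta(\theta,\theta_\xi)=(\sqrt{q}\eta+\xi)\cdot y(\theta)$, $\Psi_\eta(\theta,\theta_\xi)=-(\sqrt{q}\eta-\xi)\cdot y'(\theta)^\perp$, and $D^2\psi_\eta(\theta,\theta_\xi)=\begin{bmatrix}(\sqrt{q}\eta+\xi)\cdot y''(\theta)&\xi^\perp\cdot y'(\theta)\\ \xi^\perp\cdot y'(\theta)&-\xi\cdot y(\theta)\end{bmatrix}$. For $l\in\{1,2\}$ let $\eta_l=(-1)^{l-1}\eta$, $\theta_q=\arccos(1/\sqrt q)$, $h(\theta)=\frac{\sqrt q\sin\theta}{\sqrt q\cos\theta+1}$; the equation $(\ln\rho)'(\theta)=h(\theta-\theta_{\eta_l})$ has exactly two solutions in $\mathbb{R}/(2\pi\mathbb{Z})$: $\mathcal{T}_{1,l}\eta$ with $\theta-\theta_{\eta_l}\in(\theta_q-\pi,\pi-\theta_q)$ and $\mathcal{T}_{2,l}\eta$ with $\theta-\theta_{\eta_l}\in(\pi-\theta_q,\pi+\theta_q)$ (mod $2\pi$). Set $\{\Psi_\eta^{j,l},\psi_\eta^{j,l},D^2\psi_\eta^{j,l}\}=\{\Psi_\eta,\psi_\eta,D^2\psi_\eta\}(\mathcal{T}_{j,l}\eta,\mathcal{T}_{j,l}\eta+\delta_{l,2}\pi)$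 (these determinants are nonzero) and $f_\eta^{j,l}=\rho(\mathcal{T}_{j,l}\eta)\sin(\mathcal{T}_{j,l}\eta-\theta_\eta)$; $\delta_{l,2}$ is the Kronecker delta and $\phi$ is viewed as a function of the angle. *)

theory Defs
  imports "HOL-Analysis.Analysis"
begin

text \<open>Planar vectors are represented as pairs of reals; angles are reals
  (the circle is identified with the reals modulo 2 pi).\<close>

definition dot2 :: "real \<times> real \<Rightarrow> real \<times> real \<Rightarrow> real" where
  "dot2 a b = fst a * fst b + snd a * snd b"

definition perp2 :: "real \<times> real \<Rightarrow> real \<times> real" where
  "perp2 a = (- snd a, fst a)"

definition dir :: "real \<Rightarrow> real \<times> real" where
  "dir t = (cos t, sin t)"

definition ycurve :: "(real \<Rightarrow> real) \<Rightarrow> real \<Rightarrow> real \<times> real" where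
  "ycurve \<rho> \<theta> = (\<rho> \<theta> * cos \<theta>, \<rho> \<theta> * sin \<theta>)"

definition ycurve' :: "(real \<Rightarrow> real) \<Rightarrow> real \<Rightarrow> real \<times> real" where
  "ycurve' \<rho> \<theta> = (deriv (\<lambda>s. \<rho> s * cos s) \<theta>, deriv (\<lambda>s. \<rho> s * sin s) \<theta>)"

definition ycurve'' :: "(real \<Rightarrow> real) \<Rightarrow> real \<Rightarrow> real \<times> real" where
  "ycurve'' \<rho> \<theta> = (deriv (deriv (\<lambda>s. \<rho> s * cos s)) \<theta>,
                     deriv (deriv (\<lambda>s. \<rho> s * sin s)) \<theta>)"

text \<open>eta is given by its angle t; xi by its angle txi.\<close>
definition psi_fn :: "real \<Rightarrow> (real \<Rightarrow> real) \<Rightarrow> real \<Rightarrow> real \<Rightarrow> real \<Rightarrow> real" where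
  "psi_fn q \<rho> t \<theta> txi =
     dot2 (sqrt q * cos t + cos txi, sqrt q * sin t + sin txi) (ycurve \<rho> \<theta>)"

definition Psi_fn :: "real \<Rightarrow> (real \<Rightarrow> real) \<Rightarrow> real \<Rightarrow> real \<Rightarrow> real \<Rightarrow> real" where
  "Psi_fn q \<rho> t \<theta> txi =
     - dot2 (sqrt q * cos t - cos txi, sqrt q * sin t - sin txi) (perp2 (ycurve' \<rho> \<theta>))"

definition detD2psi :: "real \<Rightarrow> (real \<Rightarrow> real) \<Rightarrow> real \<Rightarrow> real \<Rightarrow> real \<Rightarrow> real" where
  "detD2psi q \<rho> t \<theta> txi =
     dot2 (sqrt q * cos t + cos txi, sqrt q * sin t + sin txi) (ycurve'' \<rho> \<theta>)
       * (- dot2 (dir txi) (ycurve \<rho> \<theta>))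
     - (dot2 (perp2 (dir txi)) (ycurve' \<rho> \<theta>))\<^sup>2"

definition theta_q :: "real \<Rightarrow> real" where
  "theta_q q = arccos (1 / sqrt q)"

definition hfun :: "real \<Rightarrow> real \<Rightarrow> real" where
  "hfun q \<theta> = sqrt q * sin \<theta> / (sqrt q * cos \<theta> + 1)"

definition in_mod2pi :: "real \<Rightarrow> real \<Rightarrow> real \<Rightarrow> bool" where
  "in_mod2pi x a b \<longleftrightarrow> (\<exists>k::int. x + 2 * pi * of_int k \<in> {a<..<b})"

text \<open>Angle of eta_l = (-1)^(l-1) eta, for l in {1,2}.\<close>
definition eta_angle :: "nat \<Rightarrow> real \<Rightarrow> real" where
  "eta_angle l t = (if l = 2 then t + pi else t)"

text \<open>T_{j,l} eta, as the representative in [0, 2 pi) of the unique solution of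
  (ln rho)'(theta) = h(theta - theta_{eta_l}) in the prescribed range.\<close>
definition Tmap :: "real \<Rightarrow> (real \<Rightarrow> real) \<Rightarrow> nat \<Rightarrow> nat \<Rightarrow> real \<Rightarrow> real" where
  "Tmap q \<rho> j l t = (THE \<theta>. \<theta> \<in> {0..<2*pi}
      \<and> deriv (\<lambda>s. ln (\<rho> s)) \<theta> = hfun q (\<theta> - eta_angle l t)
      \<and> (if j = 1
         then in_mod2pi (\<theta> - eta_angle l t) (theta_q q - pi) (pi - theta_q q)
         else in_mod2pi (\<theta> - eta_angle l t) (pi - theta_q q) (pi + theta_q q)))"

definition summand :: "real \<Rightarrow> (real \<Rightarrow> real) \<Rightarrow> (real \<Rightarrow> complex) \<Rightarrow> real \<Rightarrow> nat
    \<Rightarrow> real \<Rightarrow> nat \<Rightarrow> nat \<Rightarrow> complex" where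
  "summand q \<rho> \<phi> t N kn j l =
     (let T = Tmap q \<rho> j l t;
          txi = T + (if l = 2 then pi else 0);
          f = \<rho> T * sin (T - t)
      in complex_of_real (f ^ N * Psi_fn q \<rho> t T txi
                          / sqrt \<bar>detD2psi q \<rho> t T txi\<bar>)
         * \<phi> txi
         * exp (\<i> * complex_of_real (pi * (-1) ^ l * (1 - (-1) ^ j) / 4
                                     + kn * psi_fn q \<rho> t T txi)))"

end

theory Submission
  imports Defs
begin

(* Write \<theta> = \<theta>_{\<eta>_l} + x. On each of the two intervals of x where h is finite,
   h' \<ge> \<surd>q/(1 + \<surd>q) > (ln \<rho>)'', so x \<mapsto> (ln \<rho>)'(\<theta>_{\<eta>_l} + x) - h(x) decreases strictly from
   +\<infinity> to -\<infinity> and has exactly one zero; this pins down T_{j,l}\<eta>. At that point the stationarity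
   relation turns \<Psi> and det D\<^sup>2\<psi> into expressions that are visibly nonzero.

   If \<rho>'(\<theta>_\<eta> + \<pi>) = 0, then T_{1,2}\<eta> = T_{2,1}\<eta> = \<theta>_\<eta> + \<pi>, so f^{1,2} = f^{2,1} = 0. Write
   T_{1,1}\<eta> = \<theta>_\<eta> + x and T_{2,2}\<eta> = \<theta>_\<eta> + u modulo 2\<pi>, with |x| < \<pi> - \<theta>_q and |u| < \<theta>_q.
   If (ln \<rho>)'(\<theta>_\<eta>) \<noteq> 0, then x and u have its sign and \<theta> \<mapsto> \<rho>(\<theta>_\<eta> + \<theta>) sin \<theta> is strictly
   monotone between u and x, so f^{1,1} = \<rho>(\<theta>_\<eta> + x) sin x and f^{2,2} = \<rho>(\<theta>_\<eta> + u) sin u are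
   nonzero and distinct. With N = 0, 1, 2 in the hypothesis, a Vandermonde argument shows that the
   (1,1)- and (2,2)-terms and the sum of the (1,2)- and (2,1)-terms tend to 0. These terms have
   constant moduli |\<Psi>| |det D\<^sup>2\<psi>|^{-1/2} |\<phi>|, which gives the claims. *)

lemma periodic_add_int_multiple:
  fixes f :: "real \<Rightarrow> 'a"
  assumes "\<forall>x. f (x + p) = f x"
  shows "f (x + p * of_int m) = f x"
proof (induction m arbitrary: x rule: int_induct[where k = 0])
  case (step1 m)
  then show ?case
    using assms by (metis add.assoc distrib_left mult.right_neutral of_int_add of_int_1)
next
  case (step2 m)
  then show ?case
    using assms[rule_format, of "x + p * of_int (m - 1)"] by (simp add: algebra_simps)
qed simp

lemma deriv_periodic:
  fixes f :: "real \<Rightarrow> real"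
  assumes "\<forall>x. f (x + p) = f x"
  shows "deriv f (x + p) = deriv f x"
proof -
  have "(\<lambda>x. f (x + p)) = f" using assms by blast
  then have "(f has_real_derivative D) (at (x + p)) \<longleftrightarrow> (f has_real_derivative D) (at x)" for D
    using DERIV_shift[of f D x p] by simp
  then show ?thesis unfolding deriv_def by presburger
qed

lemma tendsto_zero_three_nodes:
  fixes u v w :: "nat \<Rightarrow> 'a::real_normed_field" and a b :: 'a
  assumes nodes: "a \<noteq> 0" "b \<noteq> 0" "a \<noteq> b"
    and moments: "\<And>N. (\<lambda>n. 0 ^ N * u n + a ^ N * v n + b ^ N * w n) \<longlonglongrightarrow> 0"
  shows "u \<longlonglongrightarrow> 0" "v \<longlonglongrightarrow> 0" "w \<longlonglongrightarrow> 0"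
proof -
  define S where "S N n = 0 ^ N * u n + a ^ N * v n + b ^ N * w n" for N n
  have S: "S N \<longlonglongrightarrow> 0" for N using moments unfolding S_def .
  have v_eq: "v = (\<lambda>n. (b * S 1 n - S 2 n) / (a * (b - a)))"
    using nodes by (auto simp: S_def field_simps power2_eq_square)
  have w_eq: "w = (\<lambda>n. (a * S 1 n - S 2 n) / (b * (a - b)))"
    using nodes by (auto simp: S_def field_simps power2_eq_square)
  have u_eq: "u = (\<lambda>n. S 0 n - v n - w n)"
    by (simp add: S_def)
  have "(\<lambda>n. (b * S 1 n - S 2 n) / (a * (b - a))) \<longlonglongrightarrow> (b * 0 - 0) / (a * (b - a))"
    using nodes by (intro tendsto_intros S) auto
  then show v: "v \<longlonglongrightarrow> 0" unfolding v_eq by simp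
  have "(\<lambda>n. (a * S 1 n - S 2 n) / (b * (a - b))) \<longlonglongrightarrow> (a * 0 - 0) / (b * (a - b))"
    using nodes by (intro tendsto_intros S) auto
  then show w: "w \<longlonglongrightarrow> 0" unfolding w_eq by simp
  have "(\<lambda>n. S 0 n - v n - w n) \<longlonglongrightarrow> 0 - 0 - 0"
    by (intro tendsto_intros S v w)
  then show "u \<longlonglongrightarrow> 0" unfolding u_eq by simp
qed

lemma constant_norm_tendsto_zero:
  fixes w :: "nat \<Rightarrow> 'a::real_normed_vector"
  assumes "w \<longlonglongrightarrow> 0" "\<And>n. norm (w n) = c"
  shows "c = 0"
  using tendsto_norm[OF assms(1)] assms(2) by (simp add: LIMSEQ_const_iff)

lemma constant_norms_eq_if_sum_tendsto_zero:
  fixes v w :: "nat \<Rightarrow> 'a::real_normed_vector"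
  assumes "(\<lambda>n. v n + w n) \<longlonglongrightarrow> 0" "\<And>n. norm (v n) = c" "\<And>n. norm (w n) = d"
  shows "c = d"
proof -
  have "\<bar>c - d\<bar> \<le> norm (v n + w n)" for n
    using norm_triangle_ineq3[of "v n" "- w n"] assms(2,3) by simp
  moreover have "(\<lambda>n. norm (v n + w n)) \<longlonglongrightarrow> 0"
    using tendsto_norm[OF assms(1)] by simp
  ultimately have "\<bar>c - d\<bar> \<le> 0"
    by (intro LIMSEQ_le_const[of "\<lambda>n. norm (v n + w n)"]) auto
  then show ?thesis by simp
qed

lemma filterlim_divide_at_top_by_sign:
  fixes f g :: "'a \<Rightarrow> real"
  assumes "(f \<longlongrightarrow> c) F" "c \<noteq> 0" "(g \<longlongrightarrow> 0) F" "eventually (\<lambda>x. 0 < c * g x) F"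
  shows "LIM x F. f x / g x :> at_top"
proof -
  have "LIM x F. (c * f x) / (c * g x) :> at_top"
    by (rule LIM_at_top_divide) (use assms in \<open>auto intro!: tendsto_eq_intros simp: zero_less_mult_iff\<close>)
  then show ?thesis using \<open>c \<noteq> 0\<close> by simp
qed

lemma unique_representative_mod_2pi:
  "\<exists>!\<theta>. \<theta> \<in> {0..<2 * pi} \<and> (\<exists>m::int. \<theta> = y + 2 * pi * of_int m)"
proof (rule ex_ex1I)
  define m where "m = - \<lfloor>y / (2 * pi)\<rfloor>"
  have "of_int \<lfloor>y / (2 * pi)\<rfloor> * (2 * pi) \<le> y" "y < (of_int \<lfloor>y / (2 * pi)\<rfloor> + 1) * (2 * pi)"
    by (intro floor_divide_lower floor_divide_upper; simp)+
  then have "y + 2 * pi * of_int m \<in> {0..<2 * pi}"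
    by (auto simp: m_def algebra_simps)
  then show "\<exists>\<theta>. \<theta> \<in> {0..<2 * pi} \<and> (\<exists>m::int. \<theta> = y + 2 * pi * of_int m)"
    by blast
next
  fix \<theta> \<theta>'
  assume "\<theta> \<in> {0..<2 * pi} \<and> (\<exists>m::int. \<theta> = y + 2 * pi * of_int m)"
    and "\<theta>' \<in> {0..<2 * pi} \<and> (\<exists>m::int. \<theta>' = y + 2 * pi * of_int m)"
  then obtain m m' :: int where \<theta>: "\<theta> = y + 2 * pi * of_int m" "\<theta>' = y + 2 * pi * of_int m'"
    and "\<bar>\<theta> - \<theta>'\<bar> < 2 * pi" by auto
  moreover have "\<theta> - \<theta>' = 2 * pi * of_int (m - m')"
    unfolding \<theta> by (simp add: algebra_simps)
  ultimately have "2 * pi * \<bar>of_int (m - m')\<bar> < 2 * pi * 1"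
    by (simp add: abs_mult)
  then have "\<bar>of_int (m - m')\<bar> < (1::real)"
    by (subst (asm) mult_less_cancel_left_pos) auto
  then show "\<theta> = \<theta>'" unfolding \<theta> by simp
qed

section \<open>The function h and its branches\<close>

lemma theta_q_bounds:
  assumes "q > 1"
  shows "0 < theta_q q" "theta_q q < pi / 2"
proof -
  have "0 < 1 / sqrt q" "1 / sqrt q < 1" using assms by auto
  then have "arccos 1 < arccos (1 / sqrt q)" "arccos (1 / sqrt q) < arccos 0"
    by (intro arccos_less_arccos; linarith)+
  then show "0 < theta_q q" "theta_q q < pi / 2" unfolding theta_q_def by simp_all
qed

lemma cos_theta_q:
  assumes "q > 1"
  shows "cos (theta_q q) = 1 / sqrt q"
proof -
  have "0 < 1 / sqrt q" "1 / sqrt q < 1" using assms by auto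
  then show ?thesis unfolding theta_q_def by (intro cos_arccos) linarith+
qed

(* The ranges prescribed for \<theta> - \<theta>_{\<eta>_l} in the definition of T_{1,l} (j = 1) and
   T_{2,l} (j \<noteq> 1); hfun has a pole at each end. *)

definition branch_lo :: "real \<Rightarrow> nat \<Rightarrow> real" where
  "branch_lo q j = (if j = 1 then theta_q q - pi else pi - theta_q q)"

definition branch_hi :: "real \<Rightarrow> nat \<Rightarrow> real" where
  "branch_hi q j = (if j = 1 then pi - theta_q q else pi + theta_q q)"

lemma branch_lo_less_hi: "q > 1 \<Longrightarrow> branch_lo q j < branch_hi q j"
  using theta_q_bounds[of q] unfolding branch_lo_def branch_hi_def by auto

lemma hfun_denominator_pos:
  assumes "q > 1" "x \<in> {branch_lo q 1<..<branch_hi q 1}"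
  shows "sqrt q * cos x + 1 > 0"
proof -
  have "cos (pi - theta_q q) < cos \<bar>x\<bar>"
    using assms theta_q_bounds[OF assms(1)] unfolding branch_lo_def branch_hi_def
    by (subst cos_mono_less_eq) auto
  then have "- (1 / sqrt q) < cos x" using cos_theta_q[OF assms(1)] by simp
  then show ?thesis using assms(1) by (simp add: field_simps)
qed

lemma hfun_denominator_neg:
  assumes "q > 1" "j \<noteq> 1" "x \<in> {branch_lo q j<..<branch_hi q j}"
  shows "sqrt q * cos x + 1 < 0"
proof -
  have "cos (theta_q q) < cos \<bar>x - pi\<bar>"
    using assms theta_q_bounds[OF assms(1)] unfolding branch_lo_def branch_hi_def
    by (subst cos_mono_less_eq) auto
  then have "1 / sqrt q < - cos x" using cos_theta_q[OF assms(1)] by (simp add: cos_diff)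
  then show ?thesis using assms(1) by (simp add: field_simps)
qed

lemma hfun_denominator_nonzero:
  "q > 1 \<Longrightarrow> x \<in> {branch_lo q j<..<branch_hi q j} \<Longrightarrow> sqrt q * cos x + 1 \<noteq> 0"
  using hfun_denominator_pos[of q x] hfun_denominator_neg[of q j x] by (cases "j = 1") auto

lemma hfun_denominator_at_branch_ends:
  assumes "q > 1"
  shows "sqrt q * cos (branch_lo q j) + 1 = 0" "sqrt q * cos (branch_hi q j) + 1 = 0"
  using cos_theta_q[OF assms] assms unfolding branch_lo_def branch_hi_def by (simp_all add: cos_diff)

lemma branch_2_minus_pi:
  assumes "q > 1" "u + pi \<in> {branch_lo q 2<..<branch_hi q 2}"
  shows "u \<in> {branch_lo q 1<..<branch_hi q 1}" "\<bar>u\<bar> < theta_q q" "1 < sqrt q * cos u"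
proof -
  show u: "\<bar>u\<bar> < theta_q q"
    using assms(2) unfolding branch_lo_def branch_hi_def by auto
  then show "u \<in> {branch_lo q 1<..<branch_hi q 1}"
    using theta_q_bounds[OF assms(1)] unfolding branch_lo_def branch_hi_def by auto
  have "cos (theta_q q) < cos \<bar>u\<bar>"
    using u theta_q_bounds[OF assms(1)] by (subst cos_mono_less_eq) auto
  then show "1 < sqrt q * cos u"
    using cos_theta_q[OF assms(1)] assms(1) by (simp add: field_simps)
qed

lemma hfun_numerator_sign_at_branch_ends:
  assumes "q > 1" "x \<in> {branch_lo q j<..<branch_hi q j}"
  shows "0 < sin (branch_hi q j) * (sqrt q * cos x + 1)"
    and "0 < - sin (branch_lo q j) * (sqrt q * cos x + 1)"
proof -
  define \<sigma> :: real where "\<sigma> = (if j = 1 then 1 else - 1)"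
  have "sin (theta_q q) > 0"
    using theta_q_bounds[OF assms(1)] by (intro sin_gt_zero) auto
  moreover have "0 < \<sigma> * (sqrt q * cos x + 1)"
    using hfun_denominator_pos[OF assms(1), of x] hfun_denominator_neg[OF assms(1), of j x] assms(2)
    unfolding \<sigma>_def by (cases "j = 1") auto
  ultimately have pos: "0 < sin (theta_q q) * (\<sigma> * (sqrt q * cos x + 1))"
    by simp
  have "sin (branch_hi q j) = \<sigma> * sin (theta_q q)" "- sin (branch_lo q j) = \<sigma> * sin (theta_q q)"
    unfolding \<sigma>_def branch_lo_def branch_hi_def by (simp_all add: sin_diff)
  then show "0 < sin (branch_hi q j) * (sqrt q * cos x + 1)"
    and "0 < - sin (branch_lo q j) * (sqrt q * cos x + 1)"
    using pos by (simp_all only: ac_simps)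
qed

lemma hfun_at_right_branch_lo:
  assumes "q > 1"
  shows "filterlim (hfun q) at_bot (at_right (branch_lo q j))"
proof -
  let ?lo = "branch_lo q j"
  have ev: "eventually (\<lambda>x. x \<in> {?lo<..<branch_hi q j}) (at_right ?lo)"
    by (rule eventually_at_right_real[OF branch_lo_less_hi[OF assms]])
  have "LIM x at_right ?lo. (- sqrt q * sin x) / (sqrt q * cos x + 1) :> at_top"
  proof (rule filterlim_divide_at_top_by_sign)
    show "((\<lambda>x. - sqrt q * sin x) \<longlongrightarrow> - sqrt q * sin ?lo) (at_right ?lo)"
      by (intro tendsto_intros)
    have "((\<lambda>x. sqrt q * cos x + 1) \<longlongrightarrow> sqrt q * cos ?lo + 1) (at_right ?lo)"
      by (intro tendsto_intros)
    then show "((\<lambda>x. sqrt q * cos x + 1) \<longlongrightarrow> 0) (at_right ?lo)"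
      using hfun_denominator_at_branch_ends[OF assms] by simp
    show "eventually (\<lambda>x. 0 < - sqrt q * sin ?lo * (sqrt q * cos x + 1)) (at_right ?lo)"
      using ev
    proof eventually_elim
      case (elim x)
      have "0 < sqrt q * (- sin ?lo * (sqrt q * cos x + 1))"
        using assms by (intro mult_pos_pos[OF _ hfun_numerator_sign_at_branch_ends(2)[OF assms elim]]) simp
      then show ?case by (simp only: mult.assoc mult_minus_left)
    qed
    show "- sqrt q * sin ?lo \<noteq> 0"
      using hfun_numerator_sign_at_branch_ends(2)[OF assms, where j = j and x = "(?lo + branch_hi q j) / 2"]
        branch_lo_less_hi[OF assms, of j] assms by auto
  qed
  moreover have "hfun q = (\<lambda>x. - ((- sqrt q * sin x) / (sqrt q * cos x + 1)))"
    by (simp add: fun_eq_iff hfun_def)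
  ultimately show ?thesis
    by (simp only: filterlim_uminus_at_top)
qed

lemma hfun_at_left_branch_hi:
  assumes "q > 1"
  shows "filterlim (hfun q) at_top (at_left (branch_hi q j))"
proof -
  let ?hi = "branch_hi q j"
  have ev: "eventually (\<lambda>x. x \<in> {branch_lo q j<..<?hi}) (at_left ?hi)"
    by (rule eventually_at_left_real[OF branch_lo_less_hi[OF assms]])
  have "LIM x at_left ?hi. (sqrt q * sin x) / (sqrt q * cos x + 1) :> at_top"
  proof (rule filterlim_divide_at_top_by_sign)
    show "((\<lambda>x. sqrt q * sin x) \<longlongrightarrow> sqrt q * sin ?hi) (at_left ?hi)"
      by (intro tendsto_intros)
    have "((\<lambda>x. sqrt q * cos x + 1) \<longlongrightarrow> sqrt q * cos ?hi + 1) (at_left ?hi)"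
      by (intro tendsto_intros)
    then show "((\<lambda>x. sqrt q * cos x + 1) \<longlongrightarrow> 0) (at_left ?hi)"
      using hfun_denominator_at_branch_ends[OF assms] by simp
    show "eventually (\<lambda>x. 0 < sqrt q * sin ?hi * (sqrt q * cos x + 1)) (at_left ?hi)"
      using ev
    proof eventually_elim
      case (elim x)
      have "0 < sqrt q * (sin ?hi * (sqrt q * cos x + 1))"
        using assms by (intro mult_pos_pos[OF _ hfun_numerator_sign_at_branch_ends(1)[OF assms elim]]) simp
      then show ?case by (simp only: mult.assoc)
    qed
    show "sqrt q * sin ?hi \<noteq> 0"
      using hfun_numerator_sign_at_branch_ends(1)[OF assms, where j = j and x = "(branch_lo q j + ?hi) / 2"]
        branch_lo_less_hi[OF assms, of j] assms by auto
  qed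
  moreover have "hfun q = (\<lambda>x. (sqrt q * sin x) / (sqrt q * cos x + 1))"
    by (simp add: fun_eq_iff hfun_def)
  ultimately show ?thesis by (simp only:)
qed

lemma hfun_has_real_derivative:
  assumes "q \<ge> 0" "sqrt q * cos x + 1 \<noteq> 0"
  shows "(hfun q has_real_derivative (q + sqrt q * cos x) / (sqrt q * cos x + 1)\<^sup>2) (at x)"
proof -
  have "c * Q * (Q * c + 1) + Q * s * (s * Q) = Q * Q * (s\<^sup>2 + c\<^sup>2) + Q * c" for Q c s :: real
    by (simp add: algebra_simps power2_eq_square)
  then have "cos x * sqrt q * (sqrt q * cos x + 1) + sqrt q * sin x * (sin x * sqrt q)
      = sqrt q * sqrt q * ((sin x)\<^sup>2 + (cos x)\<^sup>2) + sqrt q * cos x" .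
  also have "\<dots> = q + sqrt q * cos x"
    using assms(1) by (simp only: real_sqrt_mult_self sin_cos_squared_add abs_of_nonneg mult_1_right)
  finally have "((\<lambda>x. sqrt q * sin x / (sqrt q * cos x + 1)) has_real_derivative
      (q + sqrt q * cos x) / (sqrt q * cos x + 1)\<^sup>2) (at x)"
    using assms(2) by (auto intro!: derivative_eq_intros simp: power2_eq_square)
  moreover have "hfun q = (\<lambda>x. (sqrt q * sin x) / (sqrt q * cos x + 1))"
    by (simp add: fun_eq_iff hfun_def)
  ultimately show ?thesis by (simp only:)
qed

(* This is where the threshold in the hypothesis on (ln \<rho>)'' comes from. *)

lemma hfun_derivative_lower_bound:
  assumes "q > 1" "sqrt q * cos x + 1 \<noteq> 0"
  shows "sqrt q / (1 + sqrt q) \<le> (q + sqrt q * cos x) / (sqrt q * cos x + 1)\<^sup>2"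
proof -
  define Q where "Q = sqrt q"
  define c where "c = cos x"
  have Q: "Q > 1" "q = Q * Q" using assms(1) unfolding Q_def by auto
  have c: "-1 \<le> c" "c \<le> 1" unfolding c_def by auto
  have "Q * Q * (-1) \<le> Q * Q * c" using c Q by (intro mult_left_mono) auto
  then have "0 \<le> Q * ((1 - c) * (Q * Q * c + Q * Q + Q - 1))"
    using c Q by (intro mult_nonneg_nonneg) auto
  also have "\<dots> = (q + Q * c) * (1 + Q) - Q * (Q * c + 1)\<^sup>2"
    unfolding Q(2) by (simp add: algebra_simps power2_eq_square)
  finally show ?thesis
    using assms(2) Q unfolding Q_def[symmetric] c_def[symmetric] by (simp add: field_simps)
qed

lemma hfun_periodic: "hfun q (x + 2 * pi * of_int m) = hfun q x"
  by (rule periodic_add_int_multiple) (simp add: hfun_def)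

lemma hfun_add_pi_minus_hfun:
  assumes "q \<ge> 0" "sqrt q * cos u \<noteq> 1" "sqrt q * cos u \<noteq> - 1"
  shows "hfun q (u + pi) - hfun q u = 2 * sqrt q * sin u / ((sqrt q * cos u)\<^sup>2 - 1)"
proof -
  have "sqrt q * cos u - 1 \<noteq> 0" "sqrt q * cos u + 1 \<noteq> 0" "(sqrt q * cos u)\<^sup>2 - 1 \<noteq> 0"
    using assms(2,3) by (auto simp: power2_eq_1_iff)
  then show ?thesis
    unfolding hfun_def by (simp add: field_simps power2_eq_square)
qed

definition f_eta :: "real \<Rightarrow> (real \<Rightarrow> real) \<Rightarrow> real \<Rightarrow> nat \<Rightarrow> nat \<Rightarrow> real" where
  "f_eta q \<rho> t j l = \<rho> (Tmap q \<rho> j l t) * sin (Tmap q \<rho> j l t - t)"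

definition amplitude :: "real \<Rightarrow> (real \<Rightarrow> real) \<Rightarrow> real \<Rightarrow> nat \<Rightarrow> nat \<Rightarrow> real" where
  "amplitude q \<rho> t j l =
     (let T = Tmap q \<rho> j l t; txi = T + (if l = 2 then pi else 0)
      in Psi_fn q \<rho> t T txi / sqrt \<bar>detD2psi q \<rho> t T txi\<bar>)"

definition summand_base :: "real \<Rightarrow> (real \<Rightarrow> real) \<Rightarrow> (real \<Rightarrow> complex) \<Rightarrow> real \<Rightarrow> real
    \<Rightarrow> nat \<Rightarrow> nat \<Rightarrow> complex" where
  "summand_base q \<rho> \<phi> t kn j l =
     (let T = Tmap q \<rho> j l t; txi = T + (if l = 2 then pi else 0)
      in complex_of_real (amplitude q \<rho> t j l) * \<phi> txi
         * exp (\<i> * complex_of_real (pi * (-1) ^ l * (1 - (-1) ^ j) / 4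
                                     + kn * psi_fn q \<rho> t T txi)))"

lemma summand_eq_f_eta_power_times_base:
  "summand q \<rho> \<phi> t N kn j l = complex_of_real (f_eta q \<rho> t j l ^ N) * summand_base q \<rho> \<phi> t kn j l"
  unfolding summand_def summand_base_def amplitude_def f_eta_def Let_def by (simp add: mult.assoc)

lemma norm_summand_base:
  "norm (summand_base q \<rho> \<phi> t kn j l)
     = \<bar>amplitude q \<rho> t j l\<bar> * norm (\<phi> (Tmap q \<rho> j l t + (if l = 2 then pi else 0)))"
  unfolding summand_base_def Let_def by (simp only: norm_mult norm_of_real norm_exp_i_times mult_1_right)

section \<open>The stationarity equation\<close>

locale star_shaped_curve =
  fixes q :: real and \<rho> :: "real \<Rightarrow> real"
  assumes q_gt_1: "q > 1"
    and rho_pos: "\<And>x. \<rho> x > 0"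
    and rho_periodic: "\<And>x. \<rho> (x + 2 * pi) = \<rho> x"
    and rho_differentiable: "\<And>x. \<rho> differentiable (at x)"
    and rho'_differentiable: "\<And>x. deriv \<rho> differentiable (at x)"
    and log_rho''_less: "\<And>x. deriv (deriv (\<lambda>s. ln (\<rho> s))) x < sqrt q / (1 + sqrt q)"
begin

abbreviation log_rho' :: "real \<Rightarrow> real" where
  "log_rho' \<equiv> deriv (\<lambda>s. ln (\<rho> s))"

abbreviation branch :: "nat \<Rightarrow> real set" where
  "branch j \<equiv> {branch_lo q j<..<branch_hi q j}"

lemma rho_has_derivative: "(\<rho> has_real_derivative deriv \<rho> x) (at x)"
  using rho_differentiable DERIV_deriv_iff_real_differentiable by blast

lemma rho'_has_derivative: "(deriv \<rho> has_real_derivative deriv (deriv \<rho>) x) (at x)"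
  using rho'_differentiable DERIV_deriv_iff_real_differentiable by blast

lemma log_rho'_eq: "log_rho' = (\<lambda>x. deriv \<rho> x / \<rho> x)"
proof
  fix x
  have "((\<lambda>s. ln (\<rho> s)) has_real_derivative deriv \<rho> x / \<rho> x) (at x)"
    using rho_pos[of x] by (auto intro!: derivative_eq_intros rho_has_derivative)
  then show "log_rho' x = deriv \<rho> x / \<rho> x" by (rule DERIV_imp_deriv)
qed

lemma log_rho'_has_derivative:
  "(log_rho' has_real_derivative (deriv (deriv \<rho>) x * \<rho> x - (deriv \<rho> x)\<^sup>2) / (\<rho> x)\<^sup>2) (at x)"
  unfolding log_rho'_eq using rho_pos[of x]
  by (auto intro!: derivative_eq_intros rho_has_derivative rho'_has_derivative
      simp: power2_eq_square)

lemma log_rho''_eq: "deriv log_rho' x = (deriv (deriv \<rho>) x * \<rho> x - (deriv \<rho> x)\<^sup>2) / (\<rho> x)\<^sup>2"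
  by (rule DERIV_imp_deriv[OF log_rho'_has_derivative])

lemma log_rho'_periodic: "log_rho' (x + 2 * pi * of_int m) = log_rho' x"
  by (rule periodic_add_int_multiple) (simp add: deriv_periodic rho_periodic)

lemma rho_periodic_int: "\<rho> (x + 2 * pi * of_int m) = \<rho> x"
  by (rule periodic_add_int_multiple) (simp add: rho_periodic)

lemma ycurve'_eq:
  "ycurve' \<rho> x = (deriv \<rho> x * cos x - \<rho> x * sin x, deriv \<rho> x * sin x + \<rho> x * cos x)"
  unfolding ycurve'_def
  by (auto intro!: DERIV_imp_deriv derivative_eq_intros rho_has_derivative)

lemma ycurve''_eq:
  "ycurve'' \<rho> x =
     (deriv (deriv \<rho>) x * cos x - 2 * deriv \<rho> x * sin x - \<rho> x * cos x,
      deriv (deriv \<rho>) x * sin x + 2 * deriv \<rho> x * cos x - \<rho> x * sin x)"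
proof -
  have "deriv (\<lambda>s. \<rho> s * cos s) = (\<lambda>s. deriv \<rho> s * cos s - \<rho> s * sin s)"
    "deriv (\<lambda>s. \<rho> s * sin s) = (\<lambda>s. deriv \<rho> s * sin s + \<rho> s * cos s)"
    using ycurve'_eq unfolding ycurve'_def by (simp_all add: fun_eq_iff)
  then show ?thesis
    unfolding ycurve''_def
    by (auto intro!: DERIV_imp_deriv derivative_eq_intros rho_has_derivative rho'_has_derivative)
qed

(* stationarity_gap \<theta>_{\<eta>_l} x = 0 is the equation (ln \<rho>)'(\<theta>) = h(\<theta> - \<theta>_{\<eta>_l}) defining
   T_{j,l}\<eta>, written for \<theta> = \<theta>_{\<eta>_l} + x. *)

definition stationarity_gap :: "real \<Rightarrow> real \<Rightarrow> real" where
  "stationarity_gap a x = log_rho' (a + x) - hfun q x"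

lemma stationarity_gap_has_negative_derivative:
  assumes "x \<in> branch j"
  shows "\<exists>D. (stationarity_gap a has_real_derivative D) (at x) \<and> D < 0"
proof -
  have den: "sqrt q * cos x + 1 \<noteq> 0"
    by (rule hfun_denominator_nonzero[OF q_gt_1 assms])
  have "((\<lambda>x. log_rho' (a + x)) has_real_derivative deriv log_rho' (a + x)) (at x)"
    using DERIV_shift[of log_rho' _ x a] log_rho'_has_derivative[of "x + a"]
    by (simp add: log_rho''_eq add.commute)
  then have "(stationarity_gap a has_real_derivative
      deriv log_rho' (a + x) - (q + sqrt q * cos x) / (sqrt q * cos x + 1)\<^sup>2) (at x)"
    unfolding stationarity_gap_def[abs_def]
    using q_gt_1 den by (intro DERIV_diff hfun_has_real_derivative) auto
  moreover have "deriv log_rho' (a + x) < (q + sqrt q * cos x) / (sqrt q * cos x + 1)\<^sup>2"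
    using log_rho''_less[of "a + x"] hfun_derivative_lower_bound[OF q_gt_1 den] by linarith
  ultimately show ?thesis by (intro exI conjI) auto
qed

lemma stationarity_gap_strict_decreasing:
  assumes "x \<in> branch j" "y \<in> branch j" "x < y"
  shows "stationarity_gap a y < stationarity_gap a x"
proof (rule DERIV_neg_imp_decreasing[OF assms(3)])
  fix z assume "x \<le> z" "z \<le> y"
  then have "z \<in> branch j" using assms(1,2) by auto
  then show "\<exists>D. (stationarity_gap a has_real_derivative D) (at z) \<and> D < 0"
    by (rule stationarity_gap_has_negative_derivative)
qed

lemma stationarity_gap_continuous_on: "continuous_on (branch j) (stationarity_gap a)"
proof (intro continuous_at_imp_continuous_on ballI)
  fix x assume "x \<in> branch j"
  then obtain D where "(stationarity_gap a has_real_derivative D) (at x)"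
    using stationarity_gap_has_negative_derivative by blast
  then show "isCont (stationarity_gap a) x" by (rule DERIV_isCont)
qed

lemma log_rho'_shift_tendsto: "((\<lambda>x. log_rho' (a + x)) \<longlongrightarrow> log_rho' (a + c)) (at c within S)"
proof -
  have "isCont log_rho' (a + c)"
    using log_rho'_has_derivative by (rule DERIV_isCont)
  then show ?thesis
    by (rule isCont_tendsto_compose) (intro tendsto_intros)
qed

lemma stationarity_gap_at_right_branch_lo:
  "filterlim (stationarity_gap a) at_top (at_right (branch_lo q j))"
proof -
  have "LIM x at_right (branch_lo q j). - hfun q x :> at_top"
    using hfun_at_right_branch_lo[OF q_gt_1] by (simp add: filterlim_uminus_at_bot)
  then have "LIM x at_right (branch_lo q j). log_rho' (a + x) + - hfun q x :> at_top"
    by (rule filterlim_tendsto_add_at_top[OF log_rho'_shift_tendsto])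
  then show ?thesis by (simp add: stationarity_gap_def[abs_def])
qed

lemma stationarity_gap_at_left_branch_hi:
  "filterlim (stationarity_gap a) at_bot (at_left (branch_hi q j))"
proof -
  have "LIM x at_left (branch_hi q j). - log_rho' (a + x) + hfun q x :> at_top"
    by (rule filterlim_tendsto_add_at_top[OF tendsto_minus[OF log_rho'_shift_tendsto]
          hfun_at_left_branch_hi[OF q_gt_1]])
  then show ?thesis by (simp add: filterlim_uminus_at_bot stationarity_gap_def[abs_def])
qed

lemma stationarity_gap_root_exists: "\<exists>x\<in>branch j. stationarity_gap a x = 0"
proof -
  define mid where "mid = (branch_lo q j + branch_hi q j) / 2"
  have lo_mid: "branch_lo q j < mid" and mid_hi: "mid < branch_hi q j"
    using branch_lo_less_hi[OF q_gt_1, of j] unfolding mid_def by auto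
  have "eventually (\<lambda>x. 0 < stationarity_gap a x) (at_right (branch_lo q j))"
    using stationarity_gap_at_right_branch_lo unfolding filterlim_at_top_dense by blast
  from eventually_conj[OF this eventually_at_right_real[OF lo_mid]]
  obtain x1 where x1: "0 < stationarity_gap a x1" "x1 \<in> {branch_lo q j<..<mid}"
    using eventually_happens trivial_limit_at_right_real by blast
  have "eventually (\<lambda>x. stationarity_gap a x < 0) (at_left (branch_hi q j))"
    using stationarity_gap_at_left_branch_hi unfolding filterlim_at_bot_dense by blast
  from eventually_conj[OF this eventually_at_left_real[OF mid_hi]]
  obtain x2 where x2: "stationarity_gap a x2 < 0" "x2 \<in> {mid<..<branch_hi q j}"
    using eventually_happens trivial_limit_at_left_real by blast
  have "{x1..x2} \<subseteq> branch j" using x1 x2 by auto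
  then have "\<exists>x. x1 \<le> x \<and> x \<le> x2 \<and> stationarity_gap a x = 0"
    using x1 x2 by (intro IVT2' continuous_on_subset[OF stationarity_gap_continuous_on]) auto
  then show ?thesis using x1 x2 by force
qed

lemma stationarity_gap_pos_iff_less_root:
  assumes "x \<in> branch j" "c \<in> branch j" "stationarity_gap a x = 0"
  shows "0 < stationarity_gap a c \<longleftrightarrow> c < x"
proof
  assume pos: "0 < stationarity_gap a c"
  show "c < x"
  proof (rule ccontr)
    assume "\<not> c < x"
    then consider "c = x" | "x < c" by linarith
    then show False
      using pos assms(3) stationarity_gap_strict_decreasing[OF assms(1,2), of a] by cases auto
  qed
next
  assume "c < x"
  then show "0 < stationarity_gap a c"
    using stationarity_gap_strict_decreasing[OF assms(2,1), of a] assms(3) by simp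
qed

lemma stationarity_gap_root_unique:
  assumes "x \<in> branch j" "y \<in> branch j" "stationarity_gap a x = 0" "stationarity_gap a y = 0"
  shows "x = y"
  using stationarity_gap_pos_iff_less_root[OF assms(1,2,3)]
    stationarity_gap_pos_iff_less_root[OF assms(2,1,4)] assms(3,4) by linarith

lemma stationary_solutions_on_branch:
  assumes x: "x \<in> branch j" "stationarity_gap a x = 0"
  shows "log_rho' \<theta> = hfun q (\<theta> - a) \<and> in_mod2pi (\<theta> - a) (branch_lo q j) (branch_hi q j)
    \<longleftrightarrow> (\<exists>m::int. \<theta> = a + x + 2 * pi * of_int m)"
proof
  assume "\<exists>m::int. \<theta> = a + x + 2 * pi * of_int m"
  then obtain m :: int where \<theta>: "\<theta> = a + x + 2 * pi * of_int m" ..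
  have \<theta>_a: "\<theta> - a = x + 2 * pi * of_int m" unfolding \<theta> by simp
  have "log_rho' \<theta> = log_rho' (a + x)" unfolding \<theta> by (rule log_rho'_periodic)
  also have "\<dots> = hfun q x" using x(2) unfolding stationarity_gap_def by simp
  also have "\<dots> = hfun q (\<theta> - a)" unfolding \<theta>_a by (rule hfun_periodic[symmetric])
  finally show "log_rho' \<theta> = hfun q (\<theta> - a) \<and> in_mod2pi (\<theta> - a) (branch_lo q j) (branch_hi q j)"
    unfolding in_mod2pi_def \<theta>_a using x(1) by (auto intro!: exI[of _ "- m"])
next
  assume "log_rho' \<theta> = hfun q (\<theta> - a) \<and> in_mod2pi (\<theta> - a) (branch_lo q j) (branch_hi q j)"
  then obtain k :: int where eq: "log_rho' \<theta> = hfun q (\<theta> - a)"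
    and k: "\<theta> - a + 2 * pi * of_int k \<in> branch j"
    unfolding in_mod2pi_def by blast
  have "log_rho' (a + (\<theta> - a + 2 * pi * of_int k)) = log_rho' \<theta>"
    using log_rho'_periodic[of \<theta> k] by simp
  then have "stationarity_gap a (\<theta> - a + 2 * pi * of_int k) = 0"
    unfolding stationarity_gap_def hfun_periodic eq by simp
  then have "\<theta> - a + 2 * pi * of_int k = x"
    using stationarity_gap_root_unique[OF k x(1) _ x(2)] by blast
  then show "\<exists>m::int. \<theta> = a + x + 2 * pi * of_int m"
    by (intro exI[of _ "- k"]) auto
qed

lemma Tmap_eq_root:
  assumes "x \<in> branch j" "stationarity_gap (eta_angle l t) x = 0"
  shows "\<exists>m::int. Tmap q \<rho> j l t = eta_angle l t + x + 2 * pi * of_int m"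
proof -
  let ?a = "eta_angle l t"
  have branch_cond: "(if j = 1
      then in_mod2pi (\<theta> - ?a) (theta_q q - pi) (pi - theta_q q)
      else in_mod2pi (\<theta> - ?a) (pi - theta_q q) (pi + theta_q q))
    = in_mod2pi (\<theta> - ?a) (branch_lo q j) (branch_hi q j)" for \<theta>
    by (simp add: branch_lo_def branch_hi_def)
  have "Tmap q \<rho> j l t = (THE \<theta>. \<theta> \<in> {0..<2 * pi} \<and> (\<exists>m::int. \<theta> = ?a + x + 2 * pi * of_int m))"
    unfolding Tmap_def branch_cond stationary_solutions_on_branch[OF assms] ..
  then show ?thesis
    using theI'[OF unique_representative_mod_2pi[of "?a + x"]] by auto
qed

section \<open>Nondegeneracy of the stationary points\<close>

lemma stationary_point_identities:
  assumes T: "T = eta_angle l t + x + 2 * pi * of_int m"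
    and root: "stationarity_gap (eta_angle l t) x = 0"
    and den: "sqrt q * cos x + 1 \<noteq> 0"
  defines "txi \<equiv> T + (if l = 2 then pi else 0)"
  shows "Psi_fn q \<rho> t T txi * (sqrt q * cos x + 1) = (if l = 2 then - 1 else 1) * \<rho> T * (q - 1)"
    and "detD2psi q \<rho> t T txi * (sqrt q * cos x + 1)
      = (\<rho> T)\<^sup>2 * sqrt q * (sqrt q + cos x)
        - (sqrt q * cos x + 1)\<^sup>2 * (deriv (deriv \<rho>) T * \<rho> T - (deriv \<rho> T)\<^sup>2)"
proof -
  define e :: real where "e = (if l = 2 then - 1 else 1)"
  have e: "e * e = 1" unfolding e_def by simp
  have "T - x = t + (if l = 2 then pi else 0) + 2 * pi * of_int m"
    using T unfolding eta_angle_def by auto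
  then have "cos (T - x) = e * cos t" "sin (T - x) = e * sin t"
    unfolding e_def using periodic_add_int_multiple[of cos "2 * pi"] periodic_add_int_multiple[of sin "2 * pi"]
    by auto
  then have ct: "cos t = e * (cos T * cos x + sin T * sin x)"
    and st: "sin t = e * (sin T * cos x - cos T * sin x)"
    using e unfolding cos_diff sin_diff by (metis mult.assoc mult_1)+
  have cx: "cos txi = e * cos T" and sx: "sin txi = e * sin T"
    unfolding txi_def e_def by auto
  have "log_rho' T = hfun q x"
    using root log_rho'_periodic[of "eta_angle l t + x" m] unfolding T stationarity_gap_def by simp
  then have stat: "deriv \<rho> T * (sqrt q * cos x + 1) = sqrt q * sin x * \<rho> T"
    using rho_pos[of T] den unfolding log_rho'_eq hfun_def by (simp add: field_simps)
  have Q: "sqrt q * sqrt q = q" using q_gt_1 by simp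
  have trig: "(cos T)\<^sup>2 + (sin T)\<^sup>2 = 1" "(cos x)\<^sup>2 + (sin x)\<^sup>2 = 1" by simp_all
  show "Psi_fn q \<rho> t T txi * (sqrt q * cos x + 1) = (if l = 2 then - 1 else 1) * \<rho> T * (q - 1)"
    unfolding Psi_fn_def dot2_def perp2_def ycurve'_eq e_def[symmetric] ct st cx sx fst_conv snd_conv
    using e stat Q trig by algebra
  show "detD2psi q \<rho> t T txi * (sqrt q * cos x + 1)
      = (\<rho> T)\<^sup>2 * sqrt q * (sqrt q + cos x)
        - (sqrt q * cos x + 1)\<^sup>2 * (deriv (deriv \<rho>) T * \<rho> T - (deriv \<rho> T)\<^sup>2)"
    unfolding detD2psi_def dot2_def perp2_def dir_def ycurve_def ycurve'_eq ycurve''_eq ct st cx sx fst_conv snd_conv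
    using e stat Q trig by algebra
qed

lemma stationary_point_nondegenerate:
  assumes T: "T = eta_angle l t + x + 2 * pi * of_int m"
    and x: "x \<in> branch j" "stationarity_gap (eta_angle l t) x = 0"
  shows "Psi_fn q \<rho> t T (T + (if l = 2 then pi else 0)) \<noteq> 0"
    and "detD2psi q \<rho> t T (T + (if l = 2 then pi else 0)) \<noteq> 0"
proof -
  let ?den = "sqrt q * cos x + 1"
  let ?R = "deriv (deriv \<rho>) T * \<rho> T - (deriv \<rho> T)\<^sup>2"
  have den: "?den \<noteq> 0" by (rule hfun_denominator_nonzero[OF q_gt_1 x(1)])
  note identities = stationary_point_identities[OF T x(2) den]
  have "(if l = 2 then - 1 else 1) * \<rho> T * (q - 1) \<noteq> 0"
    using rho_pos[of T] q_gt_1 by simp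
  then show "Psi_fn q \<rho> t T (T + (if l = 2 then pi else 0)) \<noteq> 0"
    using identities(1) by force
  have "?R / (\<rho> T)\<^sup>2 < (q + sqrt q * cos x) / ?den\<^sup>2"
    using log_rho''_less[of T] hfun_derivative_lower_bound[OF q_gt_1 den]
    unfolding log_rho''_eq by linarith
  then have "?den\<^sup>2 * ?R < (q + sqrt q * cos x) * (\<rho> T)\<^sup>2"
    using rho_pos[of T] den by (simp add: field_simps)
  also have "(q + sqrt q * cos x) * (\<rho> T)\<^sup>2 = (\<rho> T)\<^sup>2 * sqrt q * (sqrt q + cos x)"
    using q_gt_1 by (simp add: algebra_simps)
  finally show "detD2psi q \<rho> t T (T + (if l = 2 then pi else 0)) \<noteq> 0"
    using identities(2) by force
qed

lemma Tmap_nondegenerate: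
  fixes j l :: nat and t :: real
  defines "T \<equiv> Tmap q \<rho> j l t"
  shows "Psi_fn q \<rho> t T (T + (if l = 2 then pi else 0)) \<noteq> 0"
    and "detD2psi q \<rho> t T (T + (if l = 2 then pi else 0)) \<noteq> 0"
proof -
  obtain x where x: "x \<in> branch j" "stationarity_gap (eta_angle l t) x = 0"
    using stationarity_gap_root_exists by blast
  then obtain m :: int where "T = eta_angle l t + x + 2 * pi * of_int m"
    unfolding T_def using Tmap_eq_root by blast
  from stationary_point_nondegenerate[OF this x]
  show "Psi_fn q \<rho> t T (T + (if l = 2 then pi else 0)) \<noteq> 0"
    and "detD2psi q \<rho> t T (T + (if l = 2 then pi else 0)) \<noteq> 0" .
qed

lemma amplitude_nonzero: "amplitude q \<rho> t j l \<noteq> 0"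
  using Tmap_nondegenerate[where j = j and l = l and t = t] unfolding amplitude_def Let_def by simp

section \<open>The direction with \<open>\<rho>'(\<theta>\<^sub>\<eta> + \<pi>) = 0\<close>\<close>

lemma radial_sine_strict_mono:
  assumes "m < M" "{m..M} \<subseteq> branch 1"
    and gap_sign: "\<And>x. x \<in> {m..M} \<Longrightarrow> 0 \<le> stationarity_gap t x * sin x"
  shows "\<rho> (t + m) * sin m < \<rho> (t + M) * sin M"
proof (rule DERIV_pos_imp_increasing[OF assms(1)])
  fix x assume "m \<le> x" "x \<le> M"
  then have x: "x \<in> {m..M}" "x \<in> branch 1" using assms(2) by auto
  let ?den = "sqrt q * cos x + 1"
  have den: "0 < ?den" by (rule hfun_denominator_pos[OF q_gt_1 x(2)])
  have "((\<lambda>x. \<rho> (t + x)) has_real_derivative deriv \<rho> (t + x)) (at x)"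
    using DERIV_shift[of \<rho> _ x t] rho_has_derivative[of "x + t"] by (simp add: add.commute)
  then have D: "((\<lambda>x. \<rho> (t + x) * sin x) has_real_derivative
      deriv \<rho> (t + x) * sin x + cos x * \<rho> (t + x)) (at x)"
    using DERIV_sin by (rule DERIV_mult)
  have "sqrt q * sin x * sin x + cos x * ?den = sqrt q + cos x"
    using sin_cos_squared_add[of x] by algebra
  then have "(sqrt q + cos x) / ?den = (sqrt q * sin x * sin x + cos x * ?den) / ?den" by simp
  also have "\<dots> = hfun q x * sin x + cos x"
    using den unfolding hfun_def by (simp add: add_divide_distrib)
  finally have h: "hfun q x * sin x + cos x = (sqrt q + cos x) / ?den" ..
  have "deriv \<rho> (t + x) * sin x + cos x * \<rho> (t + x)
      = \<rho> (t + x) * (stationarity_gap t x * sin x + (hfun q x * sin x + cos x))"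
    using rho_pos[of "t + x"] unfolding stationarity_gap_def log_rho'_eq
    by (simp add: field_simps)
  also have "\<dots> > 0"
  proof -
    have "1 < sqrt q" using q_gt_1 by simp
    then have "0 < (sqrt q + cos x) / ?den"
      using den cos_ge_minus_one[of x] by (intro divide_pos_pos) linarith+
    then show ?thesis
      unfolding h using rho_pos[of "t + x"] gap_sign[OF x(1)]
      by (intro mult_pos_pos add_nonneg_pos)
  qed
  finally show "\<exists>D. ((\<lambda>x. \<rho> (t + x) * sin x) has_real_derivative D) (at x) \<and> 0 < D"
    using D by blast
qed

lemma radial_sine_at_roots_pos:
  assumes x: "x \<in> branch 1" "stationarity_gap t x = 0"
    and u: "u + pi \<in> branch 2" "stationarity_gap (t + pi) (u + pi) = 0"
    and pos: "log_rho' t > 0"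
  shows "0 < \<rho> (t + u) * sin u" "\<rho> (t + u) * sin u < \<rho> (t + x) * sin x"
proof -
  note u_facts = branch_2_minus_pi[OF q_gt_1 u(1)]
  have theta_q: "0 < theta_q q" "theta_q q < pi / 2" by (rule theta_q_bounds[OF q_gt_1])+
  have zero_in: "0 \<in> branch 1" and pi_in: "pi \<in> branch 2"
    using theta_q unfolding branch_lo_def branch_hi_def by auto
  have gap_0: "stationarity_gap t 0 = log_rho' t" and gap_pi: "stationarity_gap (t + pi) pi = log_rho' t"
    using log_rho'_periodic[of t 1] by (simp_all add: stationarity_gap_def hfun_def algebra_simps)
  have "0 < x" "0 < u"
    using stationarity_gap_pos_iff_less_root[OF x(1) zero_in x(2)]
      stationarity_gap_pos_iff_less_root[OF u(1) pi_in u(2)] gap_0 gap_pi pos by auto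
  have sin_u: "0 < sin u" using \<open>0 < u\<close> u_facts(2) theta_q by (intro sin_gt_zero) auto
  have u_root: "log_rho' (t + u) = hfun q (u + pi)"
    using u(2) log_rho'_periodic[of "t + u" 1] by (simp add: stationarity_gap_def algebra_simps)
  have "u < x"
  proof (rule ccontr)
    assume "\<not> u < x"
    then have "log_rho' (t + u) \<le> hfun q u"
      using stationarity_gap_pos_iff_less_root[OF x(1) u_facts(1) x(2)]
      by (simp add: stationarity_gap_def)
    moreover have "0 < hfun q (u + pi) - hfun q u"
      using q_gt_1 u_facts(3) sin_u less_1_mult[OF u_facts(3) u_facts(3)]
      by (subst hfun_add_pi_minus_hfun) (auto simp: power2_eq_square)
    ultimately show False using u_root by simp
  qed
  then show "\<rho> (t + u) * sin u < \<rho> (t + x) * sin x"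
  proof (rule radial_sine_strict_mono)
    show "{u..x} \<subseteq> branch 1" using u_facts(1) x(1) by auto
    fix z assume z: "z \<in> {u..x}"
    then have "0 < sin z"
      using \<open>0 < u\<close> x(1) theta_q unfolding branch_hi_def by (intro sin_gt_zero) auto
    moreover have "0 \<le> stationarity_gap t z"
      using z x stationarity_gap_pos_iff_less_root[OF x(1) _ x(2), of z] u_facts(1)
      by (cases "z = x") auto
    ultimately show "0 \<le> stationarity_gap t z * sin z" by simp
  qed
  show "0 < \<rho> (t + u) * sin u" using rho_pos sin_u by simp
qed

lemma radial_sine_at_roots_neg:
  assumes x: "x \<in> branch 1" "stationarity_gap t x = 0"
    and u: "u + pi \<in> branch 2" "stationarity_gap (t + pi) (u + pi) = 0"
    and neg: "log_rho' t < 0"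
  shows "\<rho> (t + u) * sin u < 0" "\<rho> (t + x) * sin x < \<rho> (t + u) * sin u"
proof -
  note u_facts = branch_2_minus_pi[OF q_gt_1 u(1)]
  have theta_q: "0 < theta_q q" "theta_q q < pi / 2" by (rule theta_q_bounds[OF q_gt_1])+
  have zero_in: "0 \<in> branch 1" and pi_in: "pi \<in> branch 2"
    using theta_q unfolding branch_lo_def branch_hi_def by auto
  have gap_0: "stationarity_gap t 0 = log_rho' t" and gap_pi: "stationarity_gap (t + pi) pi = log_rho' t"
    using log_rho'_periodic[of t 1] by (simp_all add: stationarity_gap_def hfun_def algebra_simps)
  have "x \<le> 0" "u \<le> 0"
    using stationarity_gap_pos_iff_less_root[OF x(1) zero_in x(2)]
      stationarity_gap_pos_iff_less_root[OF u(1) pi_in u(2)] gap_0 gap_pi neg by auto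
  moreover have "x \<noteq> 0" "u \<noteq> 0"
    using x(2) u(2) gap_0 gap_pi neg by auto
  ultimately have "x < 0" "u < 0" by auto
  have sin_u: "sin u < 0" using \<open>u < 0\<close> u_facts(2) theta_q sin_gt_zero[of "- u"] by auto
  have u_root: "log_rho' (t + u) = hfun q (u + pi)"
    using u(2) log_rho'_periodic[of "t + u" 1] by (simp add: stationarity_gap_def algebra_simps)
  have "x < u"
  proof (rule ccontr)
    assume "\<not> x < u"
    then have "hfun q u \<le> log_rho' (t + u)"
      using stationarity_gap_pos_iff_less_root[OF x(1) u_facts(1) x(2)] x(2)
      by (cases "u = x") (auto simp: stationarity_gap_def)
    moreover have "hfun q (u + pi) - hfun q u < 0"
      using q_gt_1 u_facts(3) sin_u less_1_mult[OF u_facts(3) u_facts(3)]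
      by (subst hfun_add_pi_minus_hfun) (auto simp: power2_eq_square mult_pos_neg intro!: divide_neg_pos)
    ultimately show False using u_root by simp
  qed
  then show "\<rho> (t + x) * sin x < \<rho> (t + u) * sin u"
  proof (rule radial_sine_strict_mono)
    show "{x..u} \<subseteq> branch 1" using u_facts(1) x(1) by auto
    fix z assume z: "z \<in> {x..u}"
    then have "sin z < 0"
      using \<open>u < 0\<close> x(1) theta_q sin_gt_zero[of "- z"] unfolding branch_lo_def by auto
    moreover have "stationarity_gap t z \<le> 0"
      using z stationarity_gap_strict_decreasing[OF x(1), of z t] x u_facts(1)
      by (cases "z = x") (auto intro: less_imp_le)
    ultimately show "0 \<le> stationarity_gap t z * sin z" by (simp add: mult_nonpos_nonpos)
  qed
  show "\<rho> (t + u) * sin u < 0" using rho_pos sin_u by (simp add: mult_pos_neg)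
qed

lemma Tmap_at_critical_antipode:
  assumes "deriv \<rho> (t + pi) = 0"
  shows "\<exists>m::int. Tmap q \<rho> 1 2 t = t + pi + 2 * pi * of_int m"
    and "\<exists>m::int. Tmap q \<rho> 2 1 t = t + pi + 2 * pi * of_int m"
proof -
  have theta_q: "0 < theta_q q" "theta_q q < pi / 2" by (rule theta_q_bounds[OF q_gt_1])+
  have "0 \<in> branch 1" "pi \<in> branch 2"
    using theta_q unfolding branch_lo_def branch_hi_def by auto
  moreover have "stationarity_gap (eta_angle 2 t) 0 = 0" "stationarity_gap (eta_angle 1 t) pi = 0"
    using assms by (simp_all add: stationarity_gap_def log_rho'_eq hfun_def eta_angle_def add.commute)
  ultimately show "\<exists>m::int. Tmap q \<rho> 1 2 t = t + pi + 2 * pi * of_int m"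
    and "\<exists>m::int. Tmap q \<rho> 2 1 t = t + pi + 2 * pi * of_int m"
    using Tmap_eq_root[of 0 1 2 t] Tmap_eq_root[of pi 2 1 t] by (simp_all add: eta_angle_def)
qed

lemma f_eta_at_critical_antipode:
  assumes "deriv \<rho> (t + pi) = 0" "deriv \<rho> t \<noteq> 0"
  shows "f_eta q \<rho> t 1 2 = 0" "f_eta q \<rho> t 2 1 = 0"
    and "f_eta q \<rho> t 1 1 \<noteq> 0" "f_eta q \<rho> t 2 2 \<noteq> 0" "f_eta q \<rho> t 1 1 \<noteq> f_eta q \<rho> t 2 2"
proof -
  have sin_periodic: "sin (x + 2 * pi * of_int m) = sin x" for x m
    by (rule periodic_add_int_multiple) simp
  show "f_eta q \<rho> t 1 2 = 0" "f_eta q \<rho> t 2 1 = 0"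
    using Tmap_at_critical_antipode[OF assms(1)] sin_periodic[of pi]
    by (auto simp: f_eta_def add.assoc)
  obtain x where x: "x \<in> branch 1" "stationarity_gap t x = 0"
    using stationarity_gap_root_exists by blast
  then obtain m :: int where "Tmap q \<rho> 1 1 t = t + x + 2 * pi * of_int m"
    using Tmap_eq_root[of x 1 1 t] by (auto simp: eta_angle_def)
  then have f11: "f_eta q \<rho> t 1 1 = \<rho> (t + x) * sin x"
    using rho_periodic_int[of "t + x" m] sin_periodic[of x m] by (simp add: f_eta_def)
  obtain x' where x': "x' \<in> branch 2" "stationarity_gap (t + pi) x' = 0"
    using stationarity_gap_root_exists by blast
  define u where "u = x' - pi"
  obtain m :: int where "Tmap q \<rho> 2 2 t = t + pi + x' + 2 * pi * of_int m"
    using Tmap_eq_root[of x' 2 2 t] x' by (auto simp: eta_angle_def)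
  then have "Tmap q \<rho> 2 2 t = t + u + 2 * pi * of_int (m + 1)"
    unfolding u_def by (simp add: algebra_simps)
  then have f22: "f_eta q \<rho> t 2 2 = \<rho> (t + u) * sin u"
    using rho_periodic_int[of "t + u" "m + 1"] sin_periodic[of u "m + 1"] by (simp add: f_eta_def)
  have u: "u + pi \<in> branch 2" "stationarity_gap (t + pi) (u + pi) = 0"
    using x' unfolding u_def by simp_all
  have "log_rho' t \<noteq> 0"
    using assms(2) rho_pos[of t] unfolding log_rho'_eq by simp
  then have "\<rho> (t + x) * sin x \<noteq> 0 \<and> \<rho> (t + u) * sin u \<noteq> 0 \<and> \<rho> (t + x) * sin x \<noteq> \<rho> (t + u) * sin u"
  proof (cases "log_rho' t > 0")
    case True
    with radial_sine_at_roots_pos[OF x u] show ?thesis by fastforce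
  next
    case False
    with \<open>log_rho' t \<noteq> 0\<close> have "log_rho' t < 0" by linarith
    with radial_sine_at_roots_neg[OF x u] show ?thesis by fastforce
  qed
  then show "f_eta q \<rho> t 1 1 \<noteq> 0" "f_eta q \<rho> t 2 2 \<noteq> 0" "f_eta q \<rho> t 1 1 \<noteq> f_eta q \<rho> t 2 2"
    unfolding f11 f22 by auto
qed

lemma sum_summands_at_critical_antipode:
  assumes "deriv \<rho> (t + pi) = 0" "deriv \<rho> t \<noteq> 0"
  shows "(\<Sum>j\<in>{1,2}. \<Sum>l\<in>{1,2}. summand q \<rho> \<phi> t N kn j l)
    = 0 ^ N * (summand_base q \<rho> \<phi> t kn 1 2 + summand_base q \<rho> \<phi> t kn 2 1)
      + of_real (f_eta q \<rho> t 1 1) ^ N * summand_base q \<rho> \<phi> t kn 1 1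
      + of_real (f_eta q \<rho> t 2 2) ^ N * summand_base q \<rho> \<phi> t kn 2 2"
  using f_eta_at_critical_antipode(1,2)[OF assms]
  by (simp add: summand_eq_f_eta_power_times_base algebra_simps)

lemma phi_at_Tmap_critical_antipode:
  assumes "deriv \<rho> (t + pi) = 0" and phi_periodic: "\<forall>x. \<phi> (x + 2 * pi) = \<phi> x"
  shows "\<phi> (Tmap q \<rho> 1 2 t + pi) = \<phi> t" "\<phi> (Tmap q \<rho> 2 1 t) = \<phi> (t + pi)"
proof -
  obtain m12 m21 :: int where "Tmap q \<rho> 1 2 t = t + pi + 2 * pi * of_int m12"
    and "Tmap q \<rho> 2 1 t = t + pi + 2 * pi * of_int m21"
    using Tmap_at_critical_antipode[OF assms(1)] by blast
  then show "\<phi> (Tmap q \<rho> 1 2 t + pi) = \<phi> t" "\<phi> (Tmap q \<rho> 2 1 t) = \<phi> (t + pi)"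
    using periodic_add_int_multiple[OF phi_periodic, of t "m12 + 1"]
      periodic_add_int_multiple[OF phi_periodic, of "t + pi" m21] by (simp_all add: algebra_simps)
qed

end

theorem corollary3:
  fixes q :: real and \<rho> :: "real \<Rightarrow> real" and \<phi> :: "real \<Rightarrow> complex"
    and k :: "nat \<Rightarrow> real" and t :: real
  assumes q: "q > 1"
    and rho_pos: "\<forall>x. \<rho> x > 0"
    and rho_per: "\<forall>x. \<rho> (x + 2 * pi) = \<rho> x"
    and rho_C2: "\<forall>x. \<rho> differentiable (at x)" "\<forall>x. deriv \<rho> differentiable (at x)"
                "continuous_on UNIV (deriv (deriv \<rho>))"
    and rho_conv: "\<forall>x. deriv (deriv (\<lambda>s. ln (\<rho> s))) x < sqrt q / (1 + sqrt q)"
    and phi_cont: "continuous_on UNIV \<phi>"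
    and phi_per: "\<forall>x. \<phi> (x + 2 * pi) = \<phi> x"
    and k_pos: "\<forall>n. k n > 0"
    and k_lim: "filterlim k at_top sequentially"
    and hyp: "\<forall>s. \<forall>N::nat.
               (\<lambda>n. \<Sum>j\<in>{1,2}. \<Sum>l\<in>{1,2}. summand q \<rho> \<phi> s N (k n) j l)
               \<longlonglongrightarrow> 0"
    and eta: "deriv \<rho> (t + pi) = 0" "deriv \<rho> t \<noteq> 0"
  shows "\<phi> (Tmap q \<rho> 1 1 t) = 0 \<and> \<phi> (Tmap q \<rho> 2 2 t + pi) = 0
         \<and> (\<phi> t = 0 \<longleftrightarrow> \<phi> (t + pi) = 0)"
proof -
  interpret star_shaped_curve q \<rho>
    using q rho_pos rho_per rho_C2(1,2) rho_conv by unfold_locales auto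
  define w where "w j l n = summand_base q \<rho> \<phi> t (k n) j l" for j l n
  have "(\<lambda>n. 0 ^ N * (w 1 2 n + w 2 1 n) + of_real (f_eta q \<rho> t 1 1) ^ N * w 1 1 n
      + of_real (f_eta q \<rho> t 2 2) ^ N * w 2 2 n) \<longlonglongrightarrow> 0" for N
    using hyp[rule_format, of t N] unfolding sum_summands_at_critical_antipode[OF eta] w_def .
  from tendsto_zero_three_nodes[OF _ _ _ this]
  have lim: "(\<lambda>n. w 1 2 n + w 2 1 n) \<longlonglongrightarrow> 0" "w 1 1 \<longlonglongrightarrow> 0" "w 2 2 \<longlonglongrightarrow> 0"
    using f_eta_at_critical_antipode(3-5)[OF eta] by auto
  have norm_w: "norm (w j l n)
      = \<bar>amplitude q \<rho> t j l\<bar> * norm (\<phi> (Tmap q \<rho> j l t + (if l = 2 then pi else 0)))" for j l n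
    unfolding w_def by (rule norm_summand_base)
  have "\<bar>amplitude q \<rho> t 1 2\<bar> * norm (\<phi> t) = \<bar>amplitude q \<rho> t 2 1\<bar> * norm (\<phi> (t + pi))"
    using constant_norms_eq_if_sum_tendsto_zero[OF lim(1) norm_w norm_w]
      phi_at_Tmap_critical_antipode[OF eta(1) phi_per] by simp
  moreover have "\<phi> (Tmap q \<rho> 1 1 t) = 0" "\<phi> (Tmap q \<rho> 2 2 t + pi) = 0"
    using constant_norm_tendsto_zero[OF lim(2) norm_w] constant_norm_tendsto_zero[OF lim(3) norm_w]
      amplitude_nonzero by simp_all
  ultimately show ?thesis using amplitude_nonzero by auto
qed

end
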